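(* Let $A$ be an $n\times n$ real matrix whose eigenvalues are all distinct, and let $p\geq 1$ be an integer. Then the following are equivalent: (i) there exists a real $n\times n$ diagonal matrix $B_d$ with at most $k$ nonzero entries such that the system $\frac{dx(t)}{dt}=Ax(t)+B_d u(t)$ is controllable; (ii) there exists a real $n\times p$ matrix $B_f$ with at most $k$ nonzero entries such that the system $\frac{dx(t)}{dt}=Ax(t)+B_f u(t)$ is controllable.
   Context: Controllability refers to the usual notion for continuous-time linear time-invariant systems $\frac{dx}{dt}=Ax+Bu$ (controllability of the pair $(A,B)$). A vector or matrix is called $k$-sparse if it has at most $k$ nonzero entries; the paper phrases (i) as "the system $\Sigma_d$ is $k$-sparse controllable" and (ii) as "the system $\Sigma_f$ is $k$-sparse controllable". *)

theory Defs
  imports "HOL-Analysis.Analysis"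
begin

definition matpow :: "real^'n^'n \<Rightarrow> nat \<Rightarrow> real^'n^'n" where
  "matpow A i = ((\<lambda>M. A ** M) ^^ i) (mat 1)"

text \<open>Controllability of the pair (A,B) of dx/dt = A x + B u (Kalman criterion):
  the columns of the controllability matrix [B, AB, ..., A^(n-1) B] span R^n.\<close>
definition controllable :: "real^'n^'n \<Rightarrow> real^'m^'n \<Rightarrow> bool" where
  "controllable A B \<longleftrightarrow>
     span (\<Union>i\<in>{..<CARD('n)}. columns (matpow A i ** B)) = (UNIV :: (real^'n) set)"

definition sparse_mat :: "nat \<Rightarrow> real^'m^'n \<Rightarrow> bool" where
  "sparse_mat k M \<longleftrightarrow> card {(i, j). M $ i $ j \<noteq> 0} \<le> k"

definition diagonal_mat :: "real^'n^'n \<Rightarrow> bool" where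
  "diagonal_mat M \<longleftrightarrow> (\<forall>i j. i \<noteq> j \<longrightarrow> M $ i $ j = 0)"

text \<open>All (complex) eigenvalues of A are distinct: the characteristic polynomial
  det(z I - A) has exactly n distinct complex roots.\<close>
definition distinct_eigenvalues :: "real^'n^'n \<Rightarrow> bool" where
  "distinct_eigenvalues A \<longleftrightarrow>
     card {z :: complex. det (mat z - map_matrix complex_of_real A) = 0} = CARD('n)"

end

theory Submission
  imports Defs
begin

(* One direction is elementary: every column of B_f lies in the span of the unit vectors e_i
   for the rows i in which B_f has a nonzero entry, so the diagonal 0/1 matrix on these rows is
   no less sparse and, controllability being monotone in the column span, controllable.

   Conversely, by the Popov-Belevitch-Hautus argument every complex left eigenvector w of A pairs
   nontrivially with some column of a controllable B_d; for diagonal B_d this means that w has a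
   nonzero entry on the support S of the diagonal of B_d. A generic vector b supported on S
   (a point t of the moment curve (t ^ m_j)_(j in S) avoiding finitely many polynomial roots) then
   satisfies w^T b \<noteq> 0 for all n eigenvectors at once, and since the eigenvalues are distinct
   this makes b alone cyclic: pairing a relation sum_(i<n) c_i A^i b = 0 with the eigenvectors
   yields a real polynomial of degree < n with n distinct roots. *)

lemma polyfun_eq_0_if_card_roots:
  fixes c :: "nat \<Rightarrow> 'a::{comm_ring,real_normed_div_algebra}"
  assumes "n \<le> card Z" and roots: "\<And>z. z \<in> Z \<Longrightarrow> (\<Sum>i<n. c i * z ^ i) = 0"
  shows "\<forall>i<n. c i = 0"
proof (cases n)
  case (Suc m)
  show ?thesis
  proof (rule ccontr)
    assume "\<not> (\<forall>i<n. c i = 0)"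
    then have nz: "\<exists>k. k \<le> m \<and> c k \<noteq> 0" using Suc by (auto simp: less_Suc_eq_le)
    have "Z \<subseteq> {z. (\<Sum>i\<le>m. c i * z ^ i) = 0}"
      using roots Suc by (auto simp: lessThan_Suc_atMost)
    then have "card Z \<le> m"
      using polyfun_rootbound[OF nz] by (meson card_mono order_trans)
    then show False using assms(1) Suc by simp
  qed
qed simp

lemma finite_roots_sum_powers:
  fixes a :: "'j \<Rightarrow> 'a::{comm_ring,real_normed_div_algebra}"
  assumes "finite J" "inj_on f J" "j0 \<in> J" "a j0 \<noteq> 0"
  shows "finite {t. (\<Sum>j\<in>J. a j * t ^ f j) = 0}"
proof -
  define N where "N = Max (f ` J)"
  define c where "c i = (\<Sum>j\<in>{j \<in> J. f j = i}. a j)" for i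
  have fN: "f ` J \<subseteq> {..N}" using assms(1) by (auto simp: N_def)
  have "{j \<in> J. f j = f j0} = {j0}" using assms(2,3) by (auto dest: inj_onD)
  then have "c (f j0) \<noteq> 0" using assms(4) by (simp add: c_def)
  then have "finite {t. (\<Sum>i\<le>N. c i * t ^ i) = 0}"
    using fN assms(3) by (intro polyfun_rootbound_finite) auto
  moreover have "(\<Sum>i\<le>N. c i * t ^ i) = (\<Sum>j\<in>J. a j * t ^ f j)" for t
  proof -
    have "(\<Sum>i\<le>N. c i * t ^ i) = (\<Sum>i\<le>N. \<Sum>j\<in>{j \<in> J. f j = i}. a j * t ^ f j)"
      by (simp add: c_def sum_distrib_right)
    also have "\<dots> = (\<Sum>j\<in>J. a j * t ^ f j)"
      using sum.group[OF assms(1) finite_atMost fN] .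
    finally show ?thesis .
  qed
  ultimately show ?thesis by simp
qed

lemma span_eq_UNIV_if_independent_family:
  fixes v :: "nat \<Rightarrow> 'a::euclidean_space"
  assumes indep: "\<And>c. (\<Sum>i<DIM('a). c i *\<^sub>R v i) = 0 \<Longrightarrow> \<forall>i<DIM('a). c i = 0"
  shows "span (v ` {..<DIM('a)}) = UNIV"
proof -
  let ?I = "{..<DIM('a)}"
  have inj: "inj_on v ?I"
  proof (rule inj_onI, rule ccontr)
    fix i j assume ij: "i \<in> ?I" "j \<in> ?I" "v i = v j" "i \<noteq> j"
    define c where "c l = (if l = i then 1 else if l = j then -1 else 0 :: real)" for l
    have "(\<Sum>l\<in>?I. c l *\<^sub>R v l) = (\<Sum>l\<in>?I. (if l = i then v i else 0) - (if l = j then v j else 0))"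
      using ij by (intro sum.cong) (auto simp: c_def)
    also have "\<dots> = 0" using ij by (simp add: sum_subtractf)
    finally show False using indep[of c] ij by (auto simp: c_def)
  qed
  have "independent (v ` ?I)"
  proof (rule independent_if_scalars_zero)
    fix f x assume sum0: "(\<Sum>x\<in>v ` ?I. f x *\<^sub>R x) = 0" and x: "x \<in> v ` ?I"
    have "(\<Sum>i\<in>?I. f (v i) *\<^sub>R v i) = 0" using sum0 by (simp add: sum.reindex[OF inj])
    then show "f x = 0" using indep[of "f \<circ> v"] x by auto
  qed simp
  moreover have "card (v ` ?I) = DIM('a)" by (simp add: card_image[OF inj])
  ultimately show ?thesis
    using card_ge_dim_independent[of "v ` ?I" UNIV] by auto
qed

definition cdot :: "complex^'n \<Rightarrow> real^'n \<Rightarrow> complex" where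
  "cdot w x = (\<Sum>i\<in>UNIV. w $ i * complex_of_real (x $ i))"

lemma linear_cdot: "linear (cdot w)"
  by (rule linearI)
    (simp_all add: cdot_def algebra_simps sum.distrib sum_distrib_left
      scaleR_conv_of_real[where 'a=complex])

lemma cdot_axis: "cdot w (axis j 1) = w $ j"
  by (simp add: cdot_def axis_def if_distrib cong: if_cong)

lemma cdot_eq_0_imp_eq_0: "(\<And>x. cdot w x = 0) \<Longrightarrow> w = 0"
  by (metis cdot_axis vec_eq_iff zero_index)

lemma cdot_matrix_vector_mult:
  "cdot w (A *v x) = cdot (w v* map_matrix complex_of_real A) x"
proof -
  have "cdot w (A *v x) = (\<Sum>i\<in>UNIV. \<Sum>j\<in>UNIV. w $ i * complex_of_real (A $ i $ j) * complex_of_real (x $ j))"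
    by (simp add: cdot_def matrix_vector_mult_def sum_distrib_left mult.assoc)
  also have "\<dots> = (\<Sum>j\<in>UNIV. \<Sum>i\<in>UNIV. w $ i * complex_of_real (A $ i $ j) * complex_of_real (x $ j))"
    by (rule sum.swap)
  also have "\<dots> = cdot (w v* map_matrix complex_of_real A) x"
    by (simp add: cdot_def vector_matrix_mult_def map_matrix_def sum_distrib_right)
  finally show ?thesis .
qed

lemma cdot_left_eigenvector:
  assumes "w v* map_matrix complex_of_real A = z *s w"
  shows "cdot w (A *v x) = z * cdot w x"
  unfolding cdot_matrix_vector_mult assms by (simp add: cdot_def sum_distrib_left mult.assoc)

lemma cdot_matpow_left_eigenvector:
  assumes "w v* map_matrix complex_of_real A = z *s w"
  shows "cdot w (matpow A i *v x) = z ^ i * cdot w x"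
proof (induction i)
  case (Suc i)
  have "cdot w (matpow A (Suc i) *v x) = cdot w (A *v (matpow A i *v x))"
    by (simp add: matpow_def matrix_vector_mul_assoc)
  then show ?case using Suc by (simp add: cdot_left_eigenvector[OF assms])
qed (simp add: matpow_def)

lemma left_eigenvector_exists:
  fixes M :: "'a::field^'n^'n"
  assumes "det (mat z - M) = 0"
  shows "\<exists>w. w \<noteq> 0 \<and> w v* M = z *s w"
proof -
  have "\<not> (\<exists>B. B ** transpose (mat z - M) = mat 1)"
    using assms by (simp add: invertible_left_inverse[symmetric] invertible_det_nz)
  then obtain w where "w \<noteq> 0" "w v* (mat z - M) = 0"
    by (auto simp: matrix_left_invertible_ker)
  moreover have "w v* mat z = z *s w"
    by (simp add: vec_eq_iff vector_matrix_mult_def mat_def if_distrib mult.commute cong: if_cong)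
  ultimately show ?thesis
    by (metis eq_iff_diff_eq_0 vector_matrix_mult_diff_rdistrib)
qed

lemma exists_supported_vector_cdot_neq_0:
  fixes w :: "'z \<Rightarrow> complex^'n"
  assumes "finite Z" and "\<And>z. z \<in> Z \<Longrightarrow> \<exists>j\<in>S. w z $ j \<noteq> 0"
  shows "\<exists>b :: real^'n. (\<forall>j. b $ j \<noteq> 0 \<longrightarrow> j \<in> S) \<and> (\<forall>z\<in>Z. cdot (w z) b \<noteq> 0)"
proof -
  define b where "b t = (\<chi> j. if j \<in> S then t ^ to_nat j else 0)" for t :: real
  define roots where "roots z = {t. (\<Sum>j\<in>S. w z $ j * t ^ to_nat j) = 0}" for z
  have cdot_b: "cdot (w z) (b t) = (\<Sum>j\<in>S. w z $ j * complex_of_real t ^ to_nat j)" for z t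
    by (simp add: cdot_def b_def if_distrib sum.If_cases)
  have "finite (roots z)" if "z \<in> Z" for z
    using assms(2)[OF that] unfolding roots_def
    by (auto intro: finite_roots_sum_powers inj_on_subset[OF inj_to_nat])
  then have "finite (complex_of_real -` (\<Union>z\<in>Z. roots z))"
    using assms(1) by (intro finite_vimageI) (auto simp: inj_of_real)
  then obtain t where "t \<notin> complex_of_real -` (\<Union>z\<in>Z. roots z)"
    using ex_new_if_finite[OF infinite_UNIV_char_0] by blast
  then have "\<forall>z\<in>Z. cdot (w z) (b t) \<noteq> 0" by (auto simp: cdot_b roots_def)
  moreover have "\<forall>j. b t $ j \<noteq> 0 \<longrightarrow> j \<in> S" by (simp add: b_def)
  ultimately show ?thesis by blast
qed

definition krylov :: "real^'n^'n \<Rightarrow> real^'n \<Rightarrow> (real^'n) set" where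
  "krylov A b = (\<lambda>i. matpow A i *v b) ` {..<CARD('n)}"

lemma columns_matrix_mult: "columns (M ** B) = (*v) M ` columns (B :: real^'m^'n)"
  by (simp add: columns_image_basis image_image matrix_vector_mul_assoc)

lemma controllable_iff_krylov:
  fixes A :: "real^'n^'n"
  shows "controllable A B \<longleftrightarrow> span (\<Union>b\<in>columns B. krylov A b) = UNIV"
proof -
  have "(\<Union>i\<in>{..<CARD('n)}. columns (matpow A i ** B)) = (\<Union>b\<in>columns B. krylov A b)"
    by (auto simp: columns_matrix_mult krylov_def)
  then show ?thesis by (simp add: controllable_def)
qed

lemma controllable_if_columns_in_span:
  fixes A :: "real^'n^'n"
  assumes "columns B \<subseteq> span (columns B')" and "controllable A B"
  shows "controllable A B'"
proof -
  let ?K = "\<Union>c\<in>columns B'. krylov A c"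
  have "krylov A b \<subseteq> span ?K" if "b \<in> columns B" for b
  proof
    fix x assume "x \<in> krylov A b"
    then obtain i where i: "i < CARD('n)" "x = matpow A i *v b" by (auto simp: krylov_def)
    then have "x \<in> (*v) (matpow A i) ` span (columns B')" using that assms(1) by auto
    also have "\<dots> = span ((*v) (matpow A i) ` columns B')"
      by (simp add: span_linear_image)
    also have "\<dots> \<subseteq> span ?K"
      using i by (intro span_mono) (auto simp: krylov_def)
    finally show "x \<in> span ?K" .
  qed
  then have "span (\<Union>b\<in>columns B. krylov A b) \<subseteq> span ?K"
    by (intro span_minimal) auto
  then show ?thesis using assms(2) by (auto simp: controllable_iff_krylov)
qed

lemma controllable_imp_cdot_column_neq_0:
  assumes "controllable A B" and "w \<noteq> 0"
    and "w v* map_matrix complex_of_real A = z *s w"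
  shows "\<exists>b\<in>columns B. cdot w b \<noteq> 0"
proof (rule ccontr)
  assume "\<not> ?thesis"
  then have "(\<Union>b\<in>columns B. krylov A b) \<subseteq> {x. cdot w x = 0}"
    by (auto simp: krylov_def cdot_matpow_left_eigenvector[OF assms(3)])
  then have "span (\<Union>b\<in>columns B. krylov A b) \<subseteq> {x. cdot w x = 0}"
    by (intro span_minimal linear_subspace_kernel linear_cdot)
  then have "w = 0" using assms(1) by (auto simp: controllable_iff_krylov intro: cdot_eq_0_imp_eq_0)
  then show False using assms(2) by simp
qed

lemma span_krylov_eq_UNIV:
  fixes A :: "real^'n^'n"
  assumes "card \<Lambda> = CARD('n)"
    and "\<And>z. z \<in> \<Lambda> \<Longrightarrow> w z v* map_matrix complex_of_real A = z *s w z"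
    and "\<And>z. z \<in> \<Lambda> \<Longrightarrow> cdot (w z) b \<noteq> 0"
  shows "span (krylov A b) = UNIV"
proof -
  have "\<forall>i<CARD('n). c i = 0" if rel: "(\<Sum>i<CARD('n). c i *\<^sub>R (matpow A i *v b)) = 0" for c
  proof -
    have "(\<Sum>i<CARD('n). complex_of_real (c i) * z ^ i) = 0" if z: "z \<in> \<Lambda>" for z
    proof -
      have "0 = cdot (w z) (\<Sum>i<CARD('n). c i *\<^sub>R (matpow A i *v b))"
        by (simp add: rel linear_0[OF linear_cdot])
      also have "\<dots> = (\<Sum>i<CARD('n). complex_of_real (c i) * z ^ i) * cdot (w z) b"
        by (simp add: linear_sum[OF linear_cdot] linear_cmul[OF linear_cdot]
            cdot_matpow_left_eigenvector[OF assms(2)[OF z]] sum_distrib_right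
            scaleR_conv_of_real[where 'a=complex] mult.assoc)
      finally show ?thesis using assms(3)[OF z] by simp
    qed
    then have "\<forall>i<CARD('n). complex_of_real (c i) = 0"
      using polyfun_eq_0_if_card_roots[of _ \<Lambda> "\<lambda>i. complex_of_real (c i)"] assms(1) by auto
    then show ?thesis by simp
  qed
  then show ?thesis
    using span_eq_UNIV_if_independent_family[of "\<lambda>i. matpow A i *v b"]
    by (simp add: krylov_def)
qed

definition nnz :: "real^'m^'n \<Rightarrow> nat" where
  "nnz M = card {(i, j). M $ i $ j \<noteq> 0}"

lemma sparse_mat_iff_nnz: "sparse_mat k M \<longleftrightarrow> nnz M \<le> k"
  by (simp add: sparse_mat_def nnz_def)

lemma nnz_diagonal:
  assumes "diagonal_mat D"
  shows "nnz D = card {i. D $ i $ i \<noteq> 0}"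
proof -
  have "{(i, j). D $ i $ j \<noteq> 0} = (\<lambda>i. (i, i)) ` {i. D $ i $ i \<noteq> 0}"
    using assms unfolding diagonal_mat_def by (fastforce simp: image_iff)
  then show ?thesis by (simp add: nnz_def card_image inj_on_def)
qed

lemma column_diagonal:
  assumes "diagonal_mat D"
  shows "column j D = D $ j $ j *\<^sub>R axis j 1"
  using assms by (auto simp: diagonal_mat_def column_def axis_def vec_eq_iff)

lemma card_nonzero_rows_le_nnz: "card {i. \<exists>j. M $ i $ j \<noteq> 0} \<le> nnz M"
proof -
  have "{i. \<exists>j. M $ i $ j \<noteq> 0} = fst ` {(i, j). M $ i $ j \<noteq> 0}" by force
  then show ?thesis by (simp add: nnz_def card_image_le)
qed

definition single_column_matrix :: "'p \<Rightarrow> real^'n \<Rightarrow> real^'p^'n" where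
  "single_column_matrix j b = (\<chi> i l. if l = j then b $ i else 0)"

lemma column_single_column_matrix: "column j (single_column_matrix j b) = b"
  by (simp add: single_column_matrix_def column_def vec_eq_iff)

lemma nnz_single_column_matrix: "nnz (single_column_matrix j b) = card {i. b $ i \<noteq> 0}"
proof -
  have "{(i, l). single_column_matrix j b $ i $ l \<noteq> 0} = (\<lambda>i. (i, j)) ` {i. b $ i \<noteq> 0}"
    by (auto simp: single_column_matrix_def split: if_splits)
  then show ?thesis by (simp add: nnz_def card_image inj_on_def)
qed

lemma exists_diagonal_controllable:
  fixes A :: "real^'n^'n" and B :: "real^'p^'n"
  assumes "controllable A B"
  shows "\<exists>D :: real^'n^'n. diagonal_mat D \<and> nnz D \<le> nnz B \<and> controllable A D"
proof -
  define R where "R = {i. \<exists>j. B $ i $ j \<noteq> 0}"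
  define D :: "real^'n^'n" where "D = (\<chi> i j. if i = j \<and> i \<in> R then 1 else 0)"
  have diag: "diagonal_mat D" by (simp add: diagonal_mat_def D_def)
  have "{i. D $ i $ i \<noteq> 0} = R" by (simp add: D_def)
  then have "nnz D = card R" by (simp add: nnz_diagonal[OF diag])
  also have "\<dots> \<le> nnz B" unfolding R_def by (rule card_nonzero_rows_le_nnz)
  finally have nnz: "nnz D \<le> nnz B" .
  have "columns B \<subseteq> span (columns D)"
  proof
    fix x assume "x \<in> columns B"
    then have supp: "x $ i = 0" if "i \<notin> R" for i
      using that by (auto simp: columns_def column_def R_def)
    have "x = (\<Sum>i\<in>UNIV. x $ i *\<^sub>R axis i 1)"
      by (simp add: basis_expansion flip: scalar_mult_eq_scaleR)
    also have "\<dots> = (\<Sum>i\<in>R. x $ i *\<^sub>R column i D)"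
      using supp by (intro sum.mono_neutral_cong_right)
        (auto simp: D_def column_def axis_def vec_eq_iff)
    also have "\<dots> \<in> span (columns D)"
      by (intro span_sum span_mul span_base) (auto simp: columns_def)
    finally show "x \<in> span (columns D)" .
  qed
  then have "controllable A D" using assms by (rule controllable_if_columns_in_span)
  then show ?thesis using diag nnz by blast
qed

lemma exists_single_column_controllable:
  fixes A D :: "real^'n^'n"
  assumes "distinct_eigenvalues A" and diag: "diagonal_mat D" and "controllable A D"
  shows "\<exists>B :: real^'p^'n. nnz B \<le> nnz D \<and> controllable A B"
proof -
  define \<Lambda> where "\<Lambda> = {z. det (mat z - map_matrix complex_of_real A) = 0}"
  have card: "card \<Lambda> = CARD('n)"
    using assms(1) by (simp add: distinct_eigenvalues_def \<Lambda>_def)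
  then have "finite \<Lambda>" by (simp add: card_ge_0_finite)
  have "\<forall>z\<in>\<Lambda>. \<exists>v. v \<noteq> 0 \<and> v v* map_matrix complex_of_real A = z *s v"
    by (simp add: \<Lambda>_def left_eigenvector_exists)
  then obtain w where w: "\<And>z. z \<in> \<Lambda> \<Longrightarrow> w z \<noteq> 0 \<and> w z v* map_matrix complex_of_real A = z *s w z"
    by metis
  define S where "S = {j. D $ j $ j \<noteq> 0}"
  have "\<exists>j\<in>S. w z $ j \<noteq> 0" if z: "z \<in> \<Lambda>" for z
  proof -
    obtain j where "cdot (w z) (column j D) \<noteq> 0"
      using controllable_imp_cdot_column_neq_0[OF assms(3)] w[OF z]
      by (auto simp: columns_def)
    then show ?thesis
      by (auto simp: S_def column_diagonal[OF diag] linear_cmul[OF linear_cdot] cdot_axis)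
  qed
  then obtain b :: "real^'n" where b: "\<forall>j. b $ j \<noteq> 0 \<longrightarrow> j \<in> S" "\<forall>z\<in>\<Lambda>. cdot (w z) b \<noteq> 0"
    using exists_supported_vector_cdot_neq_0[OF \<open>finite \<Lambda>\<close>] by blast
  have "span (krylov A b) = UNIV"
    by (rule span_krylov_eq_UNIV[OF card, of w]) (simp_all add: w b(2))
  define B :: "real^'p^'n" where "B = single_column_matrix undefined b"
  have "column undefined B = b" by (simp add: B_def column_single_column_matrix)
  then have "b \<in> columns B" unfolding columns_def by blast
  then have "span (krylov A b) \<subseteq> span (\<Union>c\<in>columns B. krylov A c)"
    by (intro span_mono) auto
  then have "controllable A B"
    using \<open>span (krylov A b) = UNIV\<close> by (auto simp: controllable_iff_krylov)
  moreover have "nnz B \<le> nnz D"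
    using b(1) by (auto simp: B_def nnz_single_column_matrix nnz_diagonal[OF diag] S_def
        intro!: card_mono)
  ultimately show ?thesis by blast
qed

theorem corollary1:
  fixes A :: "real^'n^'n" and k :: nat
  assumes "distinct_eigenvalues A"
  shows "(\<exists>Bd :: real^'n^'n. diagonal_mat Bd \<and> sparse_mat k Bd \<and> controllable A Bd)
     \<longleftrightarrow> (\<exists>Bf :: real^'p^'n. sparse_mat k Bf \<and> controllable A Bf)"
proof
  assume "\<exists>Bd :: real^'n^'n. diagonal_mat Bd \<and> sparse_mat k Bd \<and> controllable A Bd"
  then obtain Bd :: "real^'n^'n" where "diagonal_mat Bd" "nnz Bd \<le> k" "controllable A Bd"
    by (auto simp: sparse_mat_iff_nnz)
  then obtain Bf :: "real^'p^'n" where "nnz Bf \<le> k" "controllable A Bf"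
    using exists_single_column_controllable[OF assms] order_trans by blast
  then show "\<exists>Bf :: real^'p^'n. sparse_mat k Bf \<and> controllable A Bf"
    by (auto simp: sparse_mat_iff_nnz)
next
  assume "\<exists>Bf :: real^'p^'n. sparse_mat k Bf \<and> controllable A Bf"
  then obtain Bf :: "real^'p^'n" where "nnz Bf \<le> k" "controllable A Bf"
    by (auto simp: sparse_mat_iff_nnz)
  then obtain Bd :: "real^'n^'n" where "diagonal_mat Bd" "nnz Bd \<le> k" "controllable A Bd"
    using exists_diagonal_controllable order_trans by blast
  then show "\<exists>Bd :: real^'n^'n. diagonal_mat Bd \<and> sparse_mat k Bd \<and> controllable A Bd"
    by (auto simp: sparse_mat_iff_nnz)
qed

end
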